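(* Let $X$ be a compact metric space and let $f\colon X\to X$ be a homeomorphism such that the restriction $f|_{\Omega(f)}\colon \Omega(f)\to\Omega(f)$ has the pseudo-orbit tracing property. If $f$ has a positively expansive measure, then $f$ has positive topological entropy, i.e. $h(f)>0$.
   Context: For a homeomorphism $g\colon Y\to Y$ of a metric space $(Y,d)$: given $\delta\ge 0$, a bi-infinite sequence $(x_i)_{i\in\mathbb{Z}}$ in $Y$ is a $\delta$-pseudo-orbit if $d(g(x_i),x_{i+1})\le\delta$ for all $i\in\mathbb{Z}$; it is $\epsilon$-shadowed if there is $x\in Y$ with $d(g^i(x),x_i)\le\epsilon$ for all $i\in\mathbb{Z}$. $g$ has the pseudo-orbit tracing property (POTP) if for every $\epsilon>0$ there is $\delta>0$ such that every $\delta$-pseudo-orbit of $g$ can be $\epsilon$-shadowed. The nonwandering set $\Omega(f)$ is the set of $x\in X$ such that for every neighborhood $U$ of $x$ there is $n\ge 1$ with $f^n(U)\cap U\ne\emptyset$; it is compact and $f(\Omega(f))=\Omega(f)$. For $x\in X$ and $\delta\ge0$ let $\Phi_\delta(x)=\{y\in X: d(f^i(x),f^i(y))\le\delta \text{ for all } i\in\mathbb{N}=\{0,1,2,\dots\}\}$. A (not necessarily invariant) Borel probability measure $\mu$ on $X$ is positively expansive if there is $e>0$ (an expansivity constant) such that $\mu(\Phi_e(x))=0$ for every $x\in X$. $h(f)$ denotes the topological entropy of $f$. *)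

theory Defs
  imports "HOL-Probability.Probability"
begin

definition zit :: "'a set \<Rightarrow> ('a \<Rightarrow> 'a) \<Rightarrow> int \<Rightarrow> 'a \<Rightarrow> 'a" where
  "zit Y g i x = (if 0 \<le> i then (g ^^ nat i) x else (inv_into Y g ^^ nat (- i)) x)"

definition pseudo_orbit :: "'a set \<Rightarrow> ('a \<Rightarrow> 'a) \<Rightarrow> real \<Rightarrow> (int \<Rightarrow> 'a::metric_space) \<Rightarrow> bool" where
  "pseudo_orbit Y g \<delta> xs \<longleftrightarrow> (\<forall>i. xs i \<in> Y) \<and> (\<forall>i. dist (g (xs i)) (xs (i + 1)) \<le> \<delta>)"

definition shadowed :: "'a set \<Rightarrow> ('a \<Rightarrow> 'a) \<Rightarrow> real \<Rightarrow> (int \<Rightarrow> 'a::metric_space) \<Rightarrow> bool" where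
  "shadowed Y g \<epsilon> xs \<longleftrightarrow> (\<exists>x\<in>Y. \<forall>i. dist (zit Y g i x) (xs i) \<le> \<epsilon>)"

definition POTP :: "'a::metric_space set \<Rightarrow> ('a \<Rightarrow> 'a) \<Rightarrow> bool" where
  "POTP Y g \<longleftrightarrow> (\<forall>\<epsilon>>0. \<exists>\<delta>>0. \<forall>xs. pseudo_orbit Y g \<delta> xs \<longrightarrow> shadowed Y g \<epsilon> xs)"

definition nonwandering :: "'a::metric_space set \<Rightarrow> ('a \<Rightarrow> 'a) \<Rightarrow> 'a set" where
  "nonwandering X f = {x \<in> X. \<forall>U. openin (top_of_set X) U \<and> x \<in> U \<longrightarrow>
      (\<exists>n\<ge>1. (f ^^ n) ` U \<inter> U \<noteq> {})}"

definition Phi :: "'a::metric_space set \<Rightarrow> ('a \<Rightarrow> 'a) \<Rightarrow> real \<Rightarrow> 'a \<Rightarrow> 'a set" where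
  "Phi X f \<delta> x = {y \<in> X. \<forall>i::nat. dist ((f ^^ i) x) ((f ^^ i) y) \<le> \<delta>}"

text \<open>Borel probability measure on X (not necessarily invariant) which is positively expansive.\<close>
definition pos_expansive_measure :: "'a::metric_space set \<Rightarrow> ('a \<Rightarrow> 'a) \<Rightarrow> 'a measure \<Rightarrow> bool" where
  "pos_expansive_measure X f M \<longleftrightarrow>
     prob_space M \<and> sets M = sets (restrict_space borel X) \<and>
     (\<exists>e>0. \<forall>x\<in>X. emeasure M (Phi X f e x) = 0)"

definition separated :: "'a::metric_space set \<Rightarrow> ('a \<Rightarrow> 'a) \<Rightarrow> nat \<Rightarrow> real \<Rightarrow> 'a set \<Rightarrow> bool" where
  "separated X f n \<epsilon> E \<longleftrightarrow> E \<subseteq> X \<and>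
     (\<forall>x\<in>E. \<forall>y\<in>E. x \<noteq> y \<longrightarrow> (\<exists>i<n. dist ((f ^^ i) x) ((f ^^ i) y) > \<epsilon>))"

definition max_sep :: "'a::metric_space set \<Rightarrow> ('a \<Rightarrow> 'a) \<Rightarrow> nat \<Rightarrow> real \<Rightarrow> ereal" where
  "max_sep X f n \<epsilon> = (SUP E \<in> {E. finite E \<and> separated X f n \<epsilon> E}. ereal (real (card E)))"

definition top_entropy :: "'a::metric_space set \<Rightarrow> ('a \<Rightarrow> 'a) \<Rightarrow> ereal" where
  "top_entropy X f = (SUP \<epsilon>\<in>{0<..}. limsup (\<lambda>n. ln (real_of_ereal (max_sep X f n \<epsilon>)) / real n))"

end

theory Submission
  imports Defs
begin

text \<open>
  Let \<open>e\<close> be an expansivity constant of the measure and \<open>\<delta>\<close> a shadowing constant of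
  \<open>f\<close> on \<open>\<Omega>(f)\<close> for \<open>e/4\<close>. Every orbit eventually stays close to \<open>\<Omega>(f)\<close> and returns
  infinitely often to one of finitely many small balls; the points sorted by that ball and
  by the time from which both happen form countably many measurable pieces covering \<open>X\<close>, so
  one piece, and a small ball inside it, has positive measure. By positive expansivity it
  contains two points \<open>x, y\<close> whose orbits are \<open>e\<close>-apart at some time \<open>m\<close>, necessarily
  after the time \<open>T\<close> of the piece. Projecting the orbit segments of \<open>x\<close> and \<open>y\<close> from \<open>T\<close>
  up to a later return into the ball onto \<open>\<Omega>(f)\<close> gives two periodic \<open>\<delta>\<close>-pseudo-orbits in
  \<open>\<Omega>(f)\<close> with a common base point that are more than \<open>3e/4\<close> apart at time \<open>m\<close>. Following
  one or the other loop in each of \<open>K\<close> blocks of length \<open>La \<cdot> Lb\<close> gives \<open>2^K\<close> pseudo-orbits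
  whose shadows are \<open>(K La Lb, e/4)\<close>-separated, so \<open>h(f) \<ge> ln 2 / (La Lb) > 0\<close>.
\<close>

section \<open>Iterates and the nonwandering set\<close>

lemma funpow_in:
  assumes "f ` X \<subseteq> X" "x \<in> X" shows "(f ^^ n) x \<in> X"
  using assms by (induction n) auto

lemma continuous_on_funpow:
  assumes "continuous_on X f" "f ` X \<subseteq> X" shows "continuous_on X (f ^^ n)"
proof (induction n)
  case (Suc n)
  have "(f ^^ n) ` X \<subseteq> X" using funpow_in[OF assms(2)] by blast
  then show ?case
    using continuous_on_compose[OF Suc continuous_on_subset[OF assms(1)]] by simp
qed simp

lemma iterates_uniformly_close:
  assumes "compact X" "continuous_on X f" "f ` X \<subseteq> X" "\<eta> > 0"
  shows "\<exists>\<rho>>0. \<forall>u\<in>X. \<forall>v\<in>X. dist u v < \<rho> \<longrightarrow> (\<forall>i\<le>T. dist ((f ^^ i) u) ((f ^^ i) v) < \<eta>)"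
proof (induction T)
  case 0
  show ?case using \<open>\<eta> > 0\<close> by auto
next
  case (Suc T)
  then obtain \<rho> where \<rho>: "\<rho> > 0"
    "\<forall>u\<in>X. \<forall>v\<in>X. dist u v < \<rho> \<longrightarrow> (\<forall>i\<le>T. dist ((f ^^ i) u) ((f ^^ i) v) < \<eta>)"
    by blast
  have "uniformly_continuous_on X (f ^^ Suc T)"
    using compact_uniformly_continuous[OF continuous_on_funpow[OF assms(2,3)] assms(1)] .
  then obtain \<rho>' where \<rho>': "\<rho>' > 0"
    "\<forall>u\<in>X. \<forall>v\<in>X. dist v u < \<rho>' \<longrightarrow> dist ((f ^^ Suc T) v) ((f ^^ Suc T) u) < \<eta>"
    unfolding uniformly_continuous_on_def using \<open>\<eta> > 0\<close> by metis
  have "\<forall>u\<in>X. \<forall>v\<in>X. dist u v < min \<rho> \<rho>' \<longrightarrow> (\<forall>i\<le>Suc T. dist ((f ^^ i) u) ((f ^^ i) v) < \<eta>)"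
    using \<rho>(2) \<rho>'(2) by (auto simp: le_Suc_eq dist_commute)
  then show ?case using \<rho>(1) \<rho>'(1) by (intro exI[of _ "min \<rho> \<rho>'"]) simp
qed

lemma wandering_set_visited_finitely:
  assumes "\<forall>n\<ge>1. (f ^^ n) ` U \<inter> U = {}"
  shows "finite {n. (f ^^ n) u \<in> U}"
proof -
  have not_less: "\<not> a < b" if "(f ^^ a) u \<in> U" "(f ^^ b) u \<in> U" for a b
  proof
    assume "a < b"
    then have "(f ^^ (b - a)) ((f ^^ a) u) = (f ^^ b) u"
      by (metis comp_apply funpow_add le_add_diff_inverse2 less_imp_le)
    then have "(f ^^ b) u \<in> (f ^^ (b - a)) ` U \<inter> U"
      using that by (metis IntI image_eqI)
    moreover have "(f ^^ (b - a)) ` U \<inter> U = {}"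
      using assms \<open>a < b\<close> by simp
    ultimately show False by simp
  qed
  show ?thesis
  proof (cases "\<exists>a. (f ^^ a) u \<in> U")
    case True
    then obtain a where a: "(f ^^ a) u \<in> U" by blast
    have "{n. (f ^^ n) u \<in> U} \<subseteq> {a}"
    proof
      fix n assume "n \<in> {n. (f ^^ n) u \<in> U}"
      then have "\<not> a < n" "\<not> n < a" using not_less a by auto
      then show "n \<in> {a}" by simp
    qed
    then show ?thesis by (rule finite_subset) simp
  qed simp
qed

lemma orbit_eventually_near_nonwandering:
  assumes "compact X" "f ` X \<subseteq> X" "\<eta> > 0" "u \<in> X"
  shows "\<exists>T. \<forall>n\<ge>T. (f ^^ n) u \<in> (\<Union>p\<in>nonwandering X f. ball p \<eta>)"
proof -
  define K where "K = X - (\<Union>p\<in>nonwandering X f. ball p \<eta>)"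
  define \<W> where "\<W> = {V. open V \<and> (\<forall>n\<ge>1. (f ^^ n) ` (X \<inter> V) \<inter> (X \<inter> V) = {})}"
  have cover: "K \<subseteq> \<Union>\<W>"
  proof
    fix z assume z: "z \<in> K"
    have "z \<notin> nonwandering X f"
    proof
      assume "z \<in> nonwandering X f"
      then show False using z \<open>\<eta> > 0\<close> unfolding K_def by (auto intro!: bexI[of _ z])
    qed
    then have "\<not> (\<forall>U. openin (top_of_set X) U \<and> z \<in> U \<longrightarrow> (\<exists>n\<ge>1. (f ^^ n) ` U \<inter> U \<noteq> {}))"
      using z unfolding K_def nonwandering_def by simp
    then obtain U where U: "openin (top_of_set X) U" "z \<in> U" "\<forall>n\<ge>1. (f ^^ n) ` U \<inter> U = {}"
      by blast
    then obtain V where V: "open V" "U = X \<inter> V" by (auto simp: openin_open)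
    then have "V \<in> \<W>" using U unfolding \<W>_def by auto
    then show "z \<in> \<Union>\<W>" using U V by auto
  qed
  have "compact K"
    unfolding K_def using \<open>compact X\<close> by (intro compact_diff) auto
  then obtain \<F> where \<F>: "\<F> \<subseteq> \<W>" "finite \<F>" "K \<subseteq> \<Union>\<F>"
    using compactE[OF _ cover] unfolding \<W>_def by blast
  have "K \<subseteq> X" unfolding K_def by blast
  then have "{n. (f ^^ n) u \<in> K} \<subseteq> (\<Union>V\<in>\<F>. {n. (f ^^ n) u \<in> X \<inter> V})"
    using \<F>(3) by blast
  moreover have "finite {n. (f ^^ n) u \<in> X \<inter> V}" if "V \<in> \<F>" for V
    using that \<F>(1) unfolding \<W>_def by (intro wandering_set_visited_finitely) auto
  ultimately have "finite {n. (f ^^ n) u \<in> K}"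
    using \<F>(2) by (meson finite_UN_I finite_subset)
  then obtain T where T: "\<forall>n\<in>{n. (f ^^ n) u \<in> K}. n < T"
    unfolding finite_nat_set_iff_bounded by blast
  have "(f ^^ n) u \<in> (\<Union>p\<in>nonwandering X f. ball p \<eta>)" if "T \<le> n" for n
    using T that funpow_in[OF assms(2,4), of n] unfolding K_def by force
  then show ?thesis by blast
qed

section \<open>Separated sets and entropy\<close>

lemma separated_card_bounded:
  assumes "compact X" "continuous_on X f" "f ` X \<subseteq> X" "\<epsilon> > 0"
  shows "\<exists>B. \<forall>E. finite E \<and> separated X f n \<epsilon> E \<longrightarrow> card E \<le> B"
proof -
  obtain \<rho> where \<rho>: "\<rho> > 0"
    "\<forall>u\<in>X. \<forall>v\<in>X. dist u v < \<rho> \<longrightarrow> (\<forall>i\<le>n. dist ((f ^^ i) u) ((f ^^ i) v) < \<epsilon>)"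
    using iterates_uniformly_close[OF assms] by blast
  obtain C where C: "finite C" "X \<subseteq> (\<Union>c\<in>C. ball c (\<rho>/2))"
    using seq_compact_imp_totally_bounded[OF compact_imp_seq_compact[OF assms(1)]] \<rho>(1)
    by (meson half_gt_zero)
  have "card E \<le> card C" if E: "finite E" "separated X f n \<epsilon> E" for E
  proof -
    have EX: "E \<subseteq> X" using E(2) unfolding separated_def by blast
    then have "\<forall>x\<in>E. \<exists>c. c \<in> C \<and> x \<in> ball c (\<rho>/2)" using C(2) by blast
    then obtain g where g: "\<And>x. x \<in> E \<Longrightarrow> g x \<in> C \<and> x \<in> ball (g x) (\<rho>/2)"
      by metis
    have "inj_on g E"
    proof (rule inj_onI, rule ccontr)
      fix x y assume xy: "x \<in> E" "y \<in> E" "g x = g y" "x \<noteq> y"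
      have "dist x y < \<rho>"
        using g[OF xy(1)] g[OF xy(2)] xy(3) by (metis dist_commute dist_triangle_half_l mem_ball)
      then have close: "\<forall>i\<le>n. dist ((f ^^ i) x) ((f ^^ i) y) < \<epsilon>" using \<rho>(2) xy EX by blast
      obtain i where "i < n" "dist ((f ^^ i) x) ((f ^^ i) y) > \<epsilon>"
        using E(2) xy unfolding separated_def by blast
      moreover have "dist ((f ^^ i) x) ((f ^^ i) y) < \<epsilon>" using close \<open>i < n\<close> by simp
      ultimately show False by linarith
    qed
    then show ?thesis using g C(1) by (intro card_inj_on_le) auto
  qed
  then show ?thesis by blast
qed

lemma card_le_max_sep:
  assumes "\<forall>E. finite E \<and> separated X f n \<epsilon> E \<longrightarrow> card E \<le> B"
    and "finite E" "separated X f n \<epsilon> E"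
  shows "card E \<le> real_of_ereal (max_sep X f n \<epsilon>)"
proof -
  have "max_sep X f n \<epsilon> \<le> ereal (real B)"
    unfolding max_sep_def using assms(1) by (intro SUP_least) auto
  moreover have "ereal (real (card E)) \<le> max_sep X f n \<epsilon>"
    unfolding max_sep_def using assms(2,3) by (intro SUP_upper) auto
  ultimately show ?thesis by (cases "max_sep X f n \<epsilon>") auto
qed

lemma top_entropy_pos_of_separated_growth:
  assumes "\<epsilon> > 0" "L > 0"
    and bounded: "\<And>n. \<exists>B. \<forall>E. finite E \<and> separated X f n \<epsilon> E \<longrightarrow> card E \<le> B"
    and growth: "\<And>K. \<exists>E. finite E \<and> separated X f (K * L) \<epsilon> E \<and> 2 ^ K \<le> card E"
  shows "top_entropy X f > 0"
proof -
  define u where "u n = ereal (ln (real_of_ereal (max_sep X f n \<epsilon>)) / real n)" for n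
  have "ereal (ln 2 / real L) \<le> u ((K + 1) * L)" for K
  proof -
    obtain E where E: "finite E" "separated X f ((K + 1) * L) \<epsilon> E" "2 ^ (K + 1) \<le> card E"
      using growth by blast
    obtain B where "\<forall>E. finite E \<and> separated X f ((K + 1) * L) \<epsilon> E \<longrightarrow> card E \<le> B"
      using bounded by blast
    then have "real (card E) \<le> real_of_ereal (max_sep X f ((K + 1) * L) \<epsilon>)"
      using card_le_max_sep[OF _ E(1,2)] by blast
    moreover have "(2::real) ^ (K + 1) \<le> real (card E)"
      using E(3) by (metis of_nat_le_iff of_nat_numeral of_nat_power)
    moreover have "(0::real) < 2 ^ (K + 1)" by simp
    ultimately have "ln ((2::real) ^ (K + 1)) \<le> ln (real_of_ereal (max_sep X f ((K + 1) * L) \<epsilon>))"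
      by (subst ln_le_cancel_iff) linarith+
    moreover have "ln ((2::real) ^ (K + 1)) = real (K + 1) * ln 2" by (rule ln_realpow)
    ultimately have "real (K + 1) * ln 2 \<le> ln (real_of_ereal (max_sep X f ((K + 1) * L) \<epsilon>))"
      by linarith
    then have "real (K + 1) * ln 2 / real ((K + 1) * L)
        \<le> ln (real_of_ereal (max_sep X f ((K + 1) * L) \<epsilon>)) / real ((K + 1) * L)"
      by (rule divide_right_mono) simp
    moreover have "real (K + 1) * ln 2 / real ((K + 1) * L) = ln 2 / real L"
      unfolding of_nat_mult by (rule mult_divide_mult_cancel_left) simp
    ultimately show ?thesis unfolding u_def by (metis ereal_less_eq(3))
  qed
  then have "ereal (ln 2 / real L) \<le> limsup (u \<circ> (\<lambda>K. (K + 1) * L))"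
    using Limsup_mono[of "\<lambda>_. ereal (ln 2 / real L)" "u \<circ> (\<lambda>K. (K + 1) * L)" sequentially]
    by (simp add: Limsup_const comp_def)
  also have "\<dots> \<le> limsup u"
    using \<open>L > 0\<close> by (intro limsup_subseq_mono strict_monoI) simp
  also have "\<dots> \<le> top_entropy X f"
    unfolding top_entropy_def u_def using \<open>\<epsilon> > 0\<close> by (intro SUP_upper) auto
  finally have "ereal (ln 2 / real L) \<le> top_entropy X f" .
  moreover have "0 < ln 2 / real L" using \<open>L > 0\<close> by simp
  ultimately show ?thesis by (meson ereal_less(2) order_less_le_trans)
qed

section \<open>Periodic pseudo-orbits and the horseshoe\<close>

definition delta_loop :: "'a::metric_space set \<Rightarrow> ('a \<Rightarrow> 'a) \<Rightarrow> real \<Rightarrow> nat \<Rightarrow> (nat \<Rightarrow> 'a) \<Rightarrow> bool" where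
  "delta_loop \<Omega> f \<delta> L a \<longleftrightarrow> 0 < L \<and> (\<forall>i<L. a i \<in> \<Omega> \<and> dist (f (a i)) (a (Suc i mod L)) \<le> \<delta>)"

lemma nat_mod_int_succ:
  assumes "0 < L"
  shows "nat ((i + 1) mod int L) = Suc (nat (i mod int L)) mod L"
proof -
  have "(i + 1) mod int L = (i mod int L + 1) mod int L" by (simp add: mod_add_left_eq)
  also have "\<dots> = int (Suc (nat (i mod int L)) mod L)"
    using assms by (simp add: of_nat_mod add.commute)
  finally show ?thesis by simp
qed

lemma delta_loop_pseudo_orbit:
  assumes "delta_loop \<Omega> f \<delta> L a"
  shows "pseudo_orbit \<Omega> f \<delta> (\<lambda>i. a (nat (i mod int L)))"
proof -
  have L: "0 < L" and a: "\<And>i. i < L \<Longrightarrow> a i \<in> \<Omega> \<and> dist (f (a i)) (a (Suc i mod L)) \<le> \<delta>"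
    using assms unfolding delta_loop_def by auto
  have "nat (i mod int L) < L" for i
    using L by (simp add: nat_less_iff)
  then show ?thesis
    unfolding pseudo_orbit_def using a by (simp add: nat_mod_int_succ[OF L])
qed

lemma div_succ_eq_if_not_dvd:
  fixes i P :: int
  assumes "0 < P" "\<not> P dvd (i + 1)"
  shows "(i + 1) div P = i div P"
proof -
  have "(i mod P + 1) mod P \<noteq> 0"
    using assms(2) by (simp add: mod_add_left_eq dvd_eq_mod_eq_0)
  then have "i mod P + 1 < P"
    using pos_mod_bound[OF assms(1), of i] by (smt (verit) mod_self)
  then have "(i mod P + 1) div P = 0" using assms(1) by simp
  have "(i + 1) div P = ((i mod P + 1) + P * (i div P)) div P" by simp
  also have "\<dots> = i div P + (i mod P + 1) div P" using assms(1) by (subst div_mult_self2) simp_all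
  also have "\<dots> = i div P" using \<open>(i mod P + 1) div P = 0\<close> by simp
  finally show ?thesis .
qed

lemma pseudo_orbit_switch:
  fixes \<alpha> \<beta> :: "int \<Rightarrow> 'a::metric_space" and P :: int
  assumes "pseudo_orbit \<Omega> f \<delta> \<alpha>" "pseudo_orbit \<Omega> f \<delta> \<beta>" "0 < P"
    and agree: "\<And>i. P dvd i \<Longrightarrow> \<alpha> i = \<beta> i"
  shows "pseudo_orbit \<Omega> f \<delta> (\<lambda>i. if 0 \<le> i \<and> nat (i div P) \<in> S then \<beta> i else \<alpha> i)"
    (is "pseudo_orbit \<Omega> f \<delta> ?xs")
proof -
  have \<alpha>: "\<And>i. \<alpha> i \<in> \<Omega>" "\<And>i. dist (f (\<alpha> i)) (\<alpha> (i + 1)) \<le> \<delta>"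
    and \<beta>: "\<And>i. \<beta> i \<in> \<Omega>" "\<And>i. dist (f (\<beta> i)) (\<beta> (i + 1)) \<le> \<delta>"
    using assms(1,2) unfolding pseudo_orbit_def by auto
  have "dist (f (?xs i)) (?xs (i + 1)) \<le> \<delta>" for i
  proof (cases "P dvd (i + 1)")
    case True
    then have "?xs (i + 1) = \<alpha> (i + 1)" "?xs (i + 1) = \<beta> (i + 1)" using agree by auto
    then show ?thesis using \<alpha>(2) \<beta>(2) by (cases "0 \<le> i \<and> nat (i div P) \<in> S") auto
  next
    case False
    then have "(i + 1) div P = i div P" by (rule div_succ_eq_if_not_dvd[OF \<open>0 < P\<close>])
    moreover have "i \<noteq> -1" using False by auto
    ultimately have "(0 \<le> i + 1 \<and> nat ((i + 1) div P) \<in> S) = (0 \<le> i \<and> nat (i div P) \<in> S)"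
      by auto
    then show ?thesis using \<alpha>(2) \<beta>(2) by auto
  qed
  then show ?thesis unfolding pseudo_orbit_def using \<alpha>(1) \<beta>(1) by auto
qed

definition loop_switch :: "nat \<Rightarrow> nat \<Rightarrow> (nat \<Rightarrow> 'a) \<Rightarrow> (nat \<Rightarrow> 'a) \<Rightarrow> nat set \<Rightarrow> int \<Rightarrow> 'a" where
  "loop_switch La Lb a b S i =
     (if 0 \<le> i \<and> nat (i div int (La * Lb)) \<in> S then b (nat (i mod int Lb)) else a (nat (i mod int La)))"

lemma loop_switch_pseudo_orbit:
  assumes a: "delta_loop \<Omega> f \<delta> La a" and b: "delta_loop \<Omega> f \<delta> Lb b" and "a 0 = b 0"
  shows "pseudo_orbit \<Omega> f \<delta> (loop_switch La Lb a b S)"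
proof -
  have "0 < int (La * Lb)" using a b unfolding delta_loop_def by simp
  moreover have "a (nat (i mod int La)) = b (nat (i mod int Lb))" if "int (La * Lb) dvd i" for i
  proof -
    have "int La dvd int (La * Lb)" "int Lb dvd int (La * Lb)" by simp_all
    then have "int La dvd i" "int Lb dvd i" using that by (meson dvd_trans)+
    then show ?thesis using \<open>a 0 = b 0\<close> by simp
  qed
  ultimately show ?thesis
    unfolding loop_switch_def
    by (rule pseudo_orbit_switch[OF delta_loop_pseudo_orbit[OF a] delta_loop_pseudo_orbit[OF b]])
qed

lemma loop_switch_at_period:
  assumes "j < La" "j < Lb"
  shows "loop_switch La Lb a b S (int (t * (La * Lb) + j)) = (if t \<in> S then b j else a j)"
proof -
  define n where "n = t * (La * Lb) + j"
  have "La \<le> La * Lb" using assms(2) by simp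
  then have "j < La * Lb" using assms(1) by linarith
  moreover have "(t * P + j) div P = t" if "j < P" for P :: nat using that by simp
  ultimately have "n div (La * Lb) = t" unfolding n_def by blast
  moreover have "n = j + La * (t * Lb)" "n = j + Lb * (t * La)"
    unfolding n_def by (simp_all add: algebra_simps)
  then have "n mod La = j" "n mod Lb = j"
    using assms by (metis mod_less mod_mult_self2)+
  ultimately show ?thesis
    unfolding loop_switch_def n_def[symmetric]
    by (simp del: of_nat_mult add: zdiv_int[symmetric] zmod_int[symmetric])
qed

lemma horseshoe_separated:
  assumes "\<Omega> \<subseteq> X" and shadowing: "\<And>xs. pseudo_orbit \<Omega> f \<delta> xs \<Longrightarrow> shadowed \<Omega> f \<epsilon> xs"
    and a: "delta_loop \<Omega> f \<delta> La a" and b: "delta_loop \<Omega> f \<delta> Lb b" and "a 0 = b 0"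
    and "j < La" "j < Lb" and apart: "3 * \<epsilon> < dist (a j) (b j)"
  shows "\<exists>E. finite E \<and> separated X f (K * (La * Lb)) \<epsilon> E \<and> 2 ^ K \<le> card E"
proof -
  define P where "P = La * Lb"
  have "La \<le> P" using b unfolding delta_loop_def P_def by simp
  then have "j < P" using \<open>j < La\<close> by linarith
  have "\<exists>x\<in>\<Omega>. \<forall>i. dist (zit \<Omega> f i x) (loop_switch La Lb a b S i) \<le> \<epsilon>" for S
    using shadowing[OF loop_switch_pseudo_orbit[OF a b \<open>a 0 = b 0\<close>]] unfolding shadowed_def .
  then obtain z where z: "\<And>S. z S \<in> \<Omega>"
    "\<And>S i. dist (zit \<Omega> f i (z S)) (loop_switch La Lb a b S i) \<le> \<epsilon>"
    by metis
  have shadow: "dist ((f ^^ n) (z S)) (loop_switch La Lb a b S (int n)) \<le> \<epsilon>" for S n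
    using z(2)[where S=S and i="int n"] by (simp add: zit_def)
  have sep: "\<epsilon> < dist ((f ^^ (t * P + j)) (z S)) ((f ^^ (t * P + j)) (z S'))"
    if "(t \<in> S) \<noteq> (t \<in> S')" for S S' t
  proof -
    define n where "n = t * P + j"
    have "loop_switch La Lb a b S (int n) = (if t \<in> S then b j else a j)"
      "loop_switch La Lb a b S' (int n) = (if t \<in> S' then b j else a j)"
      unfolding n_def P_def by (rule loop_switch_at_period[OF \<open>j < La\<close> \<open>j < Lb\<close>])+
    then have "3 * \<epsilon> < dist (loop_switch La Lb a b S (int n)) (loop_switch La Lb a b S' (int n))"
      using apart that by (auto simp: dist_commute)
    also have "\<dots> \<le> dist ((f ^^ n) (z S)) (loop_switch La Lb a b S (int n))
        + dist ((f ^^ n) (z S)) ((f ^^ n) (z S')) + dist ((f ^^ n) (z S')) (loop_switch La Lb a b S' (int n))"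
      using dist_triangle[of "loop_switch La Lb a b S (int n)" "loop_switch La Lb a b S' (int n)" "(f ^^ n) (z S)"]
        dist_triangle[of "(f ^^ n) (z S)" "loop_switch La Lb a b S' (int n)" "(f ^^ n) (z S')"]
      by (simp add: dist_commute)
    finally show ?thesis
      using shadow[where S=S and n=n] shadow[where S=S' and n=n] unfolding n_def by linarith
  qed
  have "inj_on z (Pow {..<K})"
  proof (rule inj_onI, rule ccontr)
    fix S S' assume "S \<in> Pow {..<K}" "S' \<in> Pow {..<K}" "z S = z S'" "S \<noteq> S'"
    then obtain t where "(t \<in> S) \<noteq> (t \<in> S')" by blast
    then have "\<epsilon> < 0" using sep[where S=S and S'=S' and t=t] \<open>z S = z S'\<close> by simp
    moreover have "0 \<le> \<epsilon>" using shadow[where S=S and n=0] by (meson order_trans zero_le_dist)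
    ultimately show False by simp
  qed
  then have "card (z ` Pow {..<K}) = 2 ^ K" by (simp add: card_image card_Pow)
  moreover have "separated X f (K * P) \<epsilon> (z ` Pow {..<K})"
    unfolding separated_def
  proof (intro conjI ballI impI)
    show "z ` Pow {..<K} \<subseteq> X" using z(1) \<open>\<Omega> \<subseteq> X\<close> by blast
    fix x y assume "x \<in> z ` Pow {..<K}" "y \<in> z ` Pow {..<K}" "x \<noteq> y"
    then obtain S S' where S: "S \<subseteq> {..<K}" "S' \<subseteq> {..<K}" "x = z S" "y = z S'" "S \<noteq> S'" by auto
    then obtain t where t: "(t \<in> S) \<noteq> (t \<in> S')" "t < K" by blast
    have "Suc t * P \<le> K * P" using t(2) by (intro mult_le_mono1) simp
    then have "t * P + j < K * P" using \<open>j < P\<close> by simp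
    then show "\<exists>i<K * P. \<epsilon> < dist ((f ^^ i) x) ((f ^^ i) y)" using sep[OF t(1)] S(3,4) by blast
  qed
  ultimately show ?thesis unfolding P_def by (metis finite_Pow_iff finite_imageI finite_lessThan order_refl)
qed

lemma space_restrict_borel_eq:
  assumes "sets M = sets (restrict_space borel X)"
  shows "space M = X"
  using sets_eq_imp_space_eq[OF assms] by (simp add: space_restrict_space)

lemma sets_continuous_preimage:
  assumes "sets M = sets (restrict_space borel X)" "continuous_on X h" "A \<in> sets borel"
  shows "{u \<in> X. h u \<in> A} \<in> sets M"
proof -
  have "h \<in> borel_measurable M"
    using borel_measurable_continuous_on_restrict[OF assms(2)]
    by (subst measurable_cong_sets[OF assms(1) refl])
  then have "{u \<in> space M. h u \<in> A} \<in> sets M"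
    using pred_sets2[OF assms(3)] unfolding pred_def by blast
  then show ?thesis using space_restrict_borel_eq[OF assms(1)] by simp
qed

lemma sets_Phi:
  assumes "sets M = sets (restrict_space borel X)" "continuous_on X f" "f ` X \<subseteq> X"
  shows "Phi X f e x \<in> sets M"
proof -
  have "Phi X f e x = (\<Inter>i. {u \<in> X. (f ^^ i) u \<in> cball ((f ^^ i) x) e})"
    unfolding Phi_def by auto
  also have "\<dots> \<in> sets M"
    using sets_continuous_preimage[OF assms(1) continuous_on_funpow[OF assms(2,3)]
        borel_closed[OF closed_cball]]
    by (intro sets.countable_INT' image_subsetI) auto
  finally show ?thesis .
qed

section \<open>Two loops from a positively expansive measure\<close>

definition recurrent_piece :: "'a::metric_space set \<Rightarrow> ('a \<Rightarrow> 'a) \<Rightarrow> real \<Rightarrow> real \<Rightarrow> 'a \<Rightarrow> nat \<Rightarrow> 'a set" where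
  "recurrent_piece X f \<eta> r c T = {u \<in> X. (f ^^ T) u \<in> cball c r \<and>
     (\<forall>n\<ge>T. (f ^^ n) u \<in> (\<Union>p\<in>nonwandering X f. ball p \<eta>)) \<and> (\<exists>\<^sub>\<infinity>n. (f ^^ n) u \<in> cball c r)}"

lemma sets_recurrent_piece:
  assumes "sets M = sets (restrict_space borel X)" "continuous_on X f" "f ` X \<subseteq> X"
  shows "recurrent_piece X f \<eta> r c T \<in> sets M"
proof -
  define N where "N = (\<Union>p\<in>nonwandering X f. ball p \<eta>)"
  note pre = sets_continuous_preimage[OF assms(1) continuous_on_funpow[OF assms(2,3)]]
  have "recurrent_piece X f \<eta> r c T = {u \<in> X. (f ^^ T) u \<in> cball c r}
      \<inter> (\<Inter>n\<in>{T..}. {u \<in> X. (f ^^ n) u \<in> N}) \<inter> (\<Inter>k. \<Union>n\<in>{k..}. {u \<in> X. (f ^^ n) u \<in> cball c r})"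
    unfolding recurrent_piece_def INFM_nat_le N_def[symmetric] by auto
  moreover have "{u \<in> X. (f ^^ T) u \<in> cball c r} \<in> sets M"
    by (rule pre[OF borel_closed[OF closed_cball]])
  moreover have "open N" unfolding N_def by auto
  then have "(\<Inter>n\<in>{T..}. {u \<in> X. (f ^^ n) u \<in> N}) \<in> sets M"
    using pre[OF borel_open] by (intro sets.countable_INT' image_subsetI) auto
  moreover have "(\<Inter>k. \<Union>n\<in>{k..}. {u \<in> X. (f ^^ n) u \<in> cball c r}) \<in> sets M"
    using pre[OF borel_closed[OF closed_cball]]
    by (intro sets.countable_INT' sets.countable_UN' image_subsetI) auto
  ultimately show ?thesis by simp
qed

lemma recurrent_pieces_cover:
  assumes "compact X" "f ` X \<subseteq> X" "\<eta> > 0" "finite C" "X \<subseteq> (\<Union>c\<in>C. ball c r)"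
  shows "X \<subseteq> (\<Union>(c, T)\<in>C \<times> UNIV. recurrent_piece X f \<eta> r c T)"
proof
  fix u assume u: "u \<in> X"
  have "\<exists>c\<in>C. (f ^^ n) u \<in> cball c r" for n
  proof -
    obtain c where "c \<in> C" "(f ^^ n) u \<in> ball c r" using funpow_in[OF assms(2) u, of n] assms(5) by blast
    then show ?thesis using ball_subset_cball by blast
  qed
  then have "\<exists>\<^sub>\<infinity>n. \<exists>c\<in>C. (f ^^ n) u \<in> cball c r"
    unfolding INFM_nat_le by (meson order_refl)
  then have "\<exists>c\<in>C. \<exists>\<^sub>\<infinity>n. (f ^^ n) u \<in> cball c r"
    by (rule INFM_finite_Bex_distrib[OF assms(4), THEN iffD1])
  then obtain c where c: "c \<in> C" "\<exists>\<^sub>\<infinity>n. (f ^^ n) u \<in> cball c r" by blast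
  obtain T0 where T0: "\<forall>n\<ge>T0. (f ^^ n) u \<in> (\<Union>p\<in>nonwandering X f. ball p \<eta>)"
    using orbit_eventually_near_nonwandering[OF assms(1-3) u] by blast
  obtain T where T: "T0 \<le> T" "(f ^^ T) u \<in> cball c r"
    using c(2) unfolding INFM_nat_le by blast
  have "\<forall>n\<ge>T. (f ^^ n) u \<in> (\<Union>p\<in>nonwandering X f. ball p \<eta>)"
    using T0 T(1) by (meson order_trans)
  then have "u \<in> recurrent_piece X f \<eta> r c T"
    using u c(2) T(2) unfolding recurrent_piece_def by blast
  then show "u \<in> (\<Union>(c, T)\<in>C \<times> UNIV. recurrent_piece X f \<eta> r c T)"
    using c(1) by (intro UN_I[of "(c, T)"]) auto
qed

lemma countable_cover_not_null:
  assumes "countable I" "A \<subseteq> (\<Union>i\<in>I. W i)" "A \<in> sets M" "A \<notin> null_sets M"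
  shows "\<exists>i\<in>I. W i \<notin> null_sets M"
proof (rule ccontr)
  assume "\<not> ?thesis"
  then have "(\<Union>i\<in>I. W i) \<in> null_sets M" using assms(1) by (intro null_sets_UN') auto
  then have "A \<in> null_sets M" using null_sets_subset assms(2,3) by blast
  then show False using assms(4) by contradiction
qed

lemma not_null_sets_Int_ball:
  assumes "compact X" "sets M = sets (restrict_space borel X)" "A \<in> sets M" "A \<notin> null_sets M" "0 < \<rho>"
  obtains c where "A \<inter> ball c \<rho> \<in> sets M" "A \<inter> ball c \<rho> \<notin> null_sets M"
proof -
  obtain C where C: "finite C" "X \<subseteq> (\<Union>c\<in>C. ball c \<rho>)"
    using seq_compact_imp_totally_bounded[OF compact_imp_seq_compact[OF assms(1)]] assms(5) by meson
  have AX: "A \<subseteq> X" using sets.sets_into_space[OF assms(3)] space_restrict_borel_eq[OF assms(2)] by simp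
  have sets: "A \<inter> ball c \<rho> \<in> sets M" for c
  proof -
    have "{u \<in> X. u \<in> ball c \<rho>} \<in> sets M"
      by (rule sets_continuous_preimage[OF assms(2) continuous_on_id]) simp
    moreover have "A \<inter> ball c \<rho> = A \<inter> {u \<in> X. u \<in> ball c \<rho>}" using AX by auto
    ultimately show ?thesis using assms(3) by (metis sets.Int)
  qed
  have "A \<subseteq> (\<Union>c\<in>C. A \<inter> ball c \<rho>)" using AX C(2) by blast
  then have "\<exists>c\<in>C. A \<inter> ball c \<rho> \<notin> null_sets M"
    by (rule countable_cover_not_null[OF countable_finite[OF C(1)] _ assms(3,4)])
  then obtain c where "A \<inter> ball c \<rho> \<notin> null_sets M" by blast
  then show thesis using that sets by blast
qed

lemma exists_not_null_recurrent_piece: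
  assumes "compact X" "f ` X \<subseteq> X"
    and M: "prob_space M" "sets M = sets (restrict_space borel X)" and "0 < \<eta>" "0 < r"
  obtains c T where "recurrent_piece X f \<eta> r c T \<notin> null_sets M"
proof -
  obtain C where C: "finite C" "X \<subseteq> (\<Union>c\<in>C. ball c r)"
    using seq_compact_imp_totally_bounded[OF compact_imp_seq_compact[OF assms(1)]] \<open>0 < r\<close> by blast
  have cover: "X \<subseteq> (\<Union>(c, T)\<in>C \<times> UNIV. recurrent_piece X f \<eta> r c T)"
    by (rule recurrent_pieces_cover[OF assms(1,2) \<open>0 < \<eta>\<close> C])
  have "countable (C \<times> (UNIV :: nat set))"
    using countable_finite[OF C(1)] by (intro countable_SIGMA) auto
  moreover have "X \<in> sets M" "X \<notin> null_sets M"
    using prob_space.emeasure_space_1[OF M(1)] sets.top[of M] space_restrict_borel_eq[OF M(2)] by auto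
  ultimately have "\<exists>i\<in>C \<times> UNIV. (\<lambda>(c, T). recurrent_piece X f \<eta> r c T) i \<notin> null_sets M"
    using cover by (intro countable_cover_not_null)
  then obtain i where "(\<lambda>(c, T). recurrent_piece X f \<eta> r c T) i \<notin> null_sets M" by blast
  moreover obtain c T where "i = (c, T)" by (cases i)
  ultimately show thesis using that by simp
qed

lemma separating_pair_in_recurrent_piece:
  assumes "compact X" "continuous_on X f" "f ` X \<subseteq> X"
    and M: "prob_space M" "sets M = sets (restrict_space borel X)"
    and null: "\<forall>x\<in>X. emeasure M (Phi X f e x) = 0" and "0 < \<eta>" "\<eta> \<le> e" "0 < r"
  obtains c T x y m where "x \<in> recurrent_piece X f \<eta> r c T" "y \<in> recurrent_piece X f \<eta> r c T"
    "dist ((f ^^ T) x) ((f ^^ T) y) < \<eta>" "T < m" "e < dist ((f ^^ m) x) ((f ^^ m) y)"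
proof -
  obtain c T where W: "recurrent_piece X f \<eta> r c T \<notin> null_sets M"
    by (rule exists_not_null_recurrent_piece[OF assms(1,3) M \<open>0 < \<eta>\<close> \<open>0 < r\<close>])
  obtain \<rho> where \<rho>: "\<rho> > 0"
    "\<forall>u\<in>X. \<forall>v\<in>X. dist u v < \<rho> \<longrightarrow> (\<forall>i\<le>T. dist ((f ^^ i) u) ((f ^^ i) v) < \<eta>)"
    using iterates_uniformly_close[OF assms(1-3) \<open>0 < \<eta>\<close>] by blast
  define A where "A c' = recurrent_piece X f \<eta> r c T \<inter> ball c' (\<rho> / 2)" for c'
  obtain c' where A: "A c' \<in> sets M" "A c' \<notin> null_sets M"
    unfolding A_def
    by (rule not_null_sets_Int_ball[OF assms(1) M(2) sets_recurrent_piece[OF M(2) assms(2,3)] W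
          half_gt_zero[OF \<open>\<rho> > 0\<close>]])
  have AX: "A c' \<subseteq> X" unfolding A_def recurrent_piece_def by blast
  have "A c' \<noteq> {}" using A(2) by auto
  then obtain x where x: "x \<in> A c'" by blast
  have "x \<in> X" using x AX by blast
  then have "Phi X f e x \<in> null_sets M"
    using null sets_Phi[OF M(2) assms(2,3)] by (intro null_setsI) auto
  then have "\<not> A c' \<subseteq> Phi X f e x" using A null_sets_subset by blast
  then obtain y where y: "y \<in> A c'" "y \<notin> Phi X f e x" by blast
  then obtain m where m: "e < dist ((f ^^ m) x) ((f ^^ m) y)"
    using AX unfolding Phi_def by (auto simp: not_le)
  have "dist x y < \<rho>"
    using x y(1) unfolding A_def by (metis Int_iff dist_commute dist_triangle_half_l mem_ball)
  then have close: "\<forall>i\<le>T. dist ((f ^^ i) x) ((f ^^ i) y) < \<eta>" using \<rho>(2) x y(1) AX by blast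
  have "\<not> m \<le> T"
  proof
    assume "m \<le> T"
    then have "dist ((f ^^ m) x) ((f ^^ m) y) < \<eta>" using close by blast
    then show False using m \<open>\<eta> \<le> e\<close> by linarith
  qed
  then show thesis
    using that[of x c T y m] x y(1) close m unfolding A_def by auto
qed

lemma delta_loop_along_orbit:
  assumes "z \<in> X" "f ` X \<subseteq> X" "\<Omega> \<subseteq> X" "T < N"
    and modulus: "\<And>u v. u \<in> X \<Longrightarrow> v \<in> X \<Longrightarrow> dist u v < \<rho> \<Longrightarrow> dist (f u) (f v) \<le> \<delta> / 4"
    and shadow: "\<And>n. T \<le> n \<Longrightarrow> n < N \<Longrightarrow> \<pi> n \<in> \<Omega> \<and> dist ((f ^^ n) z) (\<pi> n) < \<rho>"
    and "\<rho> \<le> \<delta> / 2" and return: "dist ((f ^^ N) z) ((f ^^ T) z) \<le> \<delta> / 4"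
  shows "delta_loop \<Omega> f \<delta> (N - T) (\<lambda>i. \<pi> (T + i))"
proof -
  have "0 < \<rho>"
    using shadow[OF order_refl \<open>T < N\<close>] zero_le_dist[of "(f ^^ T) z" "\<pi> T"] by linarith
  have step: "dist (f (\<pi> n)) ((f ^^ Suc n) z) \<le> \<delta> / 4" if "T \<le> n" "n < N" for n
    using modulus[of "\<pi> n" "(f ^^ n) z"] shadow[OF that] assms(3) funpow_in[OF assms(2,1)]
    by (auto simp: dist_commute)
  have "dist (f (\<pi> (T + i))) (\<pi> (T + Suc i mod (N - T))) \<le> \<delta>" if "i < N - T" for i
  proof (cases "Suc i < N - T")
    case True
    then have "T + Suc i mod (N - T) = Suc (T + i)" by simp
    moreover have "dist ((f ^^ Suc (T + i)) z) (\<pi> (Suc (T + i))) < \<rho>"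
      using shadow[of "Suc (T + i)"] True by simp
    moreover have "dist (f (\<pi> (T + i))) ((f ^^ Suc (T + i)) z) \<le> \<delta> / 4"
      using step[of "T + i"] that by simp
    ultimately show ?thesis
      using \<open>0 < \<rho>\<close> \<open>\<rho> \<le> \<delta> / 2\<close>
        dist_triangle[of "f (\<pi> (T + i))" "\<pi> (Suc (T + i))" "(f ^^ Suc (T + i)) z"]
      by simp
  next
    case False
    then have "Suc i = N - T" using that by simp
    then have "Suc (T + i) = N" "Suc i mod (N - T) = 0" using \<open>T < N\<close> by auto
    moreover have "dist ((f ^^ T) z) (\<pi> T) < \<rho>" using shadow[of T] \<open>T < N\<close> by simp
    ultimately show ?thesis
      using step[of "T + i"] that return \<open>\<rho> \<le> \<delta> / 2\<close>
        dist_triangle[of "f (\<pi> (T + i))" "\<pi> T" "(f ^^ N) z"] dist_triangle[of "(f ^^ N) z" "\<pi> T" "(f ^^ T) z"]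
      by simp
  qed
  then show ?thesis unfolding delta_loop_def using shadow \<open>T < N\<close> by auto
qed

lemma recurrent_piece_near_nonwandering:
  assumes "z \<in> recurrent_piece X f \<eta> r c T"
  obtains \<pi> where "\<And>n. T \<le> n \<Longrightarrow> \<pi> n \<in> nonwandering X f \<and> dist ((f ^^ n) z) (\<pi> n) < \<eta>"
proof -
  have "\<exists>p. p \<in> nonwandering X f \<and> dist ((f ^^ n) z) p < \<eta>" if "T \<le> n" for n
  proof -
    obtain p where "p \<in> nonwandering X f" "(f ^^ n) z \<in> ball p \<eta>"
      using assms \<open>T \<le> n\<close> unfolding recurrent_piece_def by blast
    then show ?thesis by (auto simp: dist_commute)
  qed
  then show thesis using that by metis
qed

lemma recurrent_piece_returns:
  assumes "z \<in> recurrent_piece X f \<eta> r c T"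
  obtains N where "m < N" "dist ((f ^^ N) z) ((f ^^ T) z) \<le> 2 * r"
proof -
  obtain N where "m < N" "(f ^^ N) z \<in> cball c r"
    using assms unfolding recurrent_piece_def INFM_nat by blast
  moreover have "(f ^^ T) z \<in> cball c r" using assms unfolding recurrent_piece_def by blast
  ultimately have "dist ((f ^^ N) z) ((f ^^ T) z) \<le> 2 * r"
    using dist_triangle[of "(f ^^ N) z" "(f ^^ T) z" c] by (simp add: dist_commute)
  with \<open>m < N\<close> show thesis by (rule that)
qed

lemma delta_loops_of_separating_pair:
  assumes x: "x \<in> recurrent_piece X f \<eta> r c T" and y: "y \<in> recurrent_piece X f \<eta> r c T"
    and "dist ((f ^^ T) x) ((f ^^ T) y) < \<eta>" "T < m" "e < dist ((f ^^ m) x) ((f ^^ m) y)"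
    and "f ` X \<subseteq> X" "\<eta> \<le> \<delta> / 4" "r \<le> \<delta> / 8"
    and modulus: "\<And>u v. u \<in> X \<Longrightarrow> v \<in> X \<Longrightarrow> dist u v < 2 * \<eta> \<Longrightarrow> dist (f u) (f v) \<le> \<delta> / 4"
  obtains La Lb a b j where "delta_loop (nonwandering X f) f \<delta> La a"
    "delta_loop (nonwandering X f) f \<delta> Lb b" "a 0 = b 0" "j < La" "j < Lb"
    "e - 2 * \<eta> < dist (a j) (b j)"
proof -
  define \<Omega> where "\<Omega> = nonwandering X f"
  have "\<Omega> \<subseteq> X" unfolding \<Omega>_def nonwandering_def by blast
  have X: "x \<in> X" "y \<in> X" using x y unfolding recurrent_piece_def by blast+
  obtain \<pi>x where \<pi>x: "\<And>n. T \<le> n \<Longrightarrow> \<pi>x n \<in> \<Omega> \<and> dist ((f ^^ n) x) (\<pi>x n) < \<eta>"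
    unfolding \<Omega>_def by (rule recurrent_piece_near_nonwandering[OF x]) blast
  obtain \<pi>y where \<pi>y: "\<And>n. T \<le> n \<Longrightarrow> \<pi>y n \<in> \<Omega> \<and> dist ((f ^^ n) y) (\<pi>y n) < \<eta>"
    unfolding \<Omega>_def by (rule recurrent_piece_near_nonwandering[OF y]) blast
  have "0 \<le> \<eta>"
    using \<pi>x[OF order_refl] zero_le_dist[of "(f ^^ T) x" "\<pi>x T"] by linarith
  obtain Nx where Nx: "m < Nx" "dist ((f ^^ Nx) x) ((f ^^ T) x) \<le> 2 * r"
    by (rule recurrent_piece_returns[OF x])
  obtain Ny where Ny: "m < Ny" "dist ((f ^^ Ny) y) ((f ^^ T) y) \<le> 2 * r"
    by (rule recurrent_piece_returns[OF y])
  \<comment> \<open>Both loops start at \<open>\<pi>x T\<close>; for \<open>y\<close> this costs a shadowing error below \<open>2\<eta>\<close> at time \<open>T\<close>.\<close>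
  define \<pi>y' where "\<pi>y' n = (if n = T then \<pi>x T else \<pi>y n)" for n
  have "dist ((f ^^ T) y) (\<pi>x T) < 2 * \<eta>"
    using \<pi>x[OF order_refl] \<open>dist ((f ^^ T) x) ((f ^^ T) y) < \<eta>\<close>
      dist_triangle[of "(f ^^ T) y" "\<pi>x T" "(f ^^ T) x"]
    by (simp add: dist_commute)
  then have \<pi>y': "\<pi>y' n \<in> \<Omega> \<and> dist ((f ^^ n) y) (\<pi>y' n) < 2 * \<eta>" if "T \<le> n" for n
    using \<pi>x[OF order_refl] \<pi>y[OF that] \<open>0 \<le> \<eta>\<close> unfolding \<pi>y'_def by auto
  have loop_x: "delta_loop \<Omega> f \<delta> (Nx - T) (\<lambda>i. \<pi>x (T + i))"
  proof (rule delta_loop_along_orbit[OF X(1) \<open>f ` X \<subseteq> X\<close> \<open>\<Omega> \<subseteq> X\<close> _ modulus])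
    show "\<pi>x n \<in> \<Omega> \<and> dist ((f ^^ n) x) (\<pi>x n) < 2 * \<eta>" if "T \<le> n" "n < Nx" for n
      using \<pi>x[OF that(1)] \<open>0 \<le> \<eta>\<close> by auto
  qed (use \<open>T < m\<close> Nx \<open>\<eta> \<le> \<delta> / 4\<close> \<open>r \<le> \<delta> / 8\<close> in auto)
  have loop_y: "delta_loop \<Omega> f \<delta> (Ny - T) (\<lambda>i. \<pi>y' (T + i))"
  proof (rule delta_loop_along_orbit[OF X(2) \<open>f ` X \<subseteq> X\<close> \<open>\<Omega> \<subseteq> X\<close> _ modulus])
    show "\<pi>y' n \<in> \<Omega> \<and> dist ((f ^^ n) y) (\<pi>y' n) < 2 * \<eta>" if "T \<le> n" "n < Ny" for n
      using \<pi>y'[OF that(1)] .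
  qed (use \<open>T < m\<close> Ny \<open>\<eta> \<le> \<delta> / 4\<close> \<open>r \<le> \<delta> / 8\<close> in auto)
  have "e - 2 * \<eta> < dist (\<pi>x m) (\<pi>y m)"
    using \<pi>x[of m] \<pi>y[of m] \<open>T < m\<close> \<open>e < dist ((f ^^ m) x) ((f ^^ m) y)\<close>
      dist_triangle[of "(f ^^ m) x" "(f ^^ m) y" "\<pi>x m"] dist_triangle[of "\<pi>x m" "(f ^^ m) y" "\<pi>y m"]
    by (simp add: dist_commute)
  then show thesis
    using that[OF loop_x[unfolded \<Omega>_def] loop_y[unfolded \<Omega>_def], of "m - T"] \<open>T < m\<close> Nx(1) Ny(1)
    unfolding \<pi>y'_def by simp
qed

lemma delta_loops_of_pos_expansive_measure:
  assumes "compact X" "continuous_on X f" "f ` X \<subseteq> X"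
    and M: "prob_space M" "sets M = sets (restrict_space borel X)"
    and null: "\<forall>x\<in>X. emeasure M (Phi X f e x) = 0" and "0 < e" "0 < \<delta>"
  obtains La Lb a b j where "delta_loop (nonwandering X f) f \<delta> La a"
    "delta_loop (nonwandering X f) f \<delta> Lb b" "a 0 = b 0" "j < La" "j < Lb"
    "3 * (e / 4) < dist (a j) (b j)"
proof -
  have "\<delta> / 4 > 0" using \<open>0 < \<delta>\<close> by simp
  then obtain \<rho> where "\<rho> > 0" and modulus: "\<forall>u\<in>X. \<forall>v\<in>X. dist v u < \<rho> \<longrightarrow> dist (f v) (f u) < \<delta> / 4"
    using compact_uniformly_continuous[OF assms(2,1)] unfolding uniformly_continuous_on_def by blast
  define \<eta> where "\<eta> = min (\<rho> / 2) (min (\<delta> / 8) (e / 8))"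
  have \<eta>: "0 < \<eta>" "2 * \<eta> \<le> \<rho>" "\<eta> \<le> \<delta> / 4" "\<eta> \<le> e" "3 * (e / 4) \<le> e - 2 * \<eta>"
    unfolding \<eta>_def using \<open>\<rho> > 0\<close> \<open>0 < \<delta>\<close> \<open>0 < e\<close> by auto
  have modulus': "dist (f u) (f v) \<le> \<delta> / 4" if "u \<in> X" "v \<in> X" "dist u v < 2 * \<eta>" for u v
  proof -
    have "dist u v < \<rho>" using that(3) \<eta>(2) by linarith
    then show ?thesis using modulus[rule_format, OF that(2,1)] by simp
  qed
  have "0 < \<delta> / 8" using \<open>0 < \<delta>\<close> by simp
  then obtain c T x y m where pair: "x \<in> recurrent_piece X f \<eta> (\<delta> / 8) c T"
    "y \<in> recurrent_piece X f \<eta> (\<delta> / 8) c T"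
    "dist ((f ^^ T) x) ((f ^^ T) y) < \<eta>" "T < m" "e < dist ((f ^^ m) x) ((f ^^ m) y)"
    by (rule separating_pair_in_recurrent_piece[OF assms(1-3) M null \<eta>(1,4)])
  obtain La Lb a b j where loops: "delta_loop (nonwandering X f) f \<delta> La a"
    "delta_loop (nonwandering X f) f \<delta> Lb b" "a 0 = b 0" "j < La" "j < Lb"
    and apart: "e - 2 * \<eta> < dist (a j) (b j)"
    by (rule delta_loops_of_separating_pair[OF pair assms(3) \<eta>(3) order_refl modulus'])
  have "3 * (e / 4) < dist (a j) (b j)" using apart \<eta>(5) by linarith
  with loops show thesis by (rule that)
qed

theorem theorem1:
  fixes X :: "'a::metric_space set" and f :: "'a \<Rightarrow> 'a"
  assumes "compact X"
    and "\<exists>g. homeomorphism X X f g"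
    and "POTP (nonwandering X f) f"
    and "\<exists>M. pos_expansive_measure X f M"
  shows "top_entropy X f > 0"
proof -
  obtain g where "homeomorphism X X f g" using assms(2) by blast
  then have cont: "continuous_on X f" and fX: "f ` X \<subseteq> X" unfolding homeomorphism_def by auto
  obtain M where "pos_expansive_measure X f M" using assms(4) by blast
  then have M: "prob_space M" "sets M = sets (restrict_space borel X)"
    and "\<exists>e>0. \<forall>x\<in>X. emeasure M (Phi X f e x) = 0"
    unfolding pos_expansive_measure_def by simp_all
  then obtain e where "e > 0" and null: "\<forall>x\<in>X. emeasure M (Phi X f e x) = 0" by blast
  then have "e / 4 > 0" by simp
  then obtain \<delta> where "\<delta> > 0"
    and shadowing: "\<And>xs. pseudo_orbit (nonwandering X f) f \<delta> xs \<Longrightarrow> shadowed (nonwandering X f) f (e / 4) xs"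
    using assms(3) unfolding POTP_def by blast
  obtain La Lb a b j where loops: "delta_loop (nonwandering X f) f \<delta> La a"
    "delta_loop (nonwandering X f) f \<delta> Lb b" "a 0 = b 0" "j < La" "j < Lb"
    "3 * (e / 4) < dist (a j) (b j)"
    by (rule delta_loops_of_pos_expansive_measure[OF assms(1) cont fX M null \<open>e > 0\<close> \<open>\<delta> > 0\<close>])
  have "nonwandering X f \<subseteq> X" unfolding nonwandering_def by blast
  then have growth: "\<And>K. \<exists>E. finite E \<and> separated X f (K * (La * Lb)) (e / 4) E \<and> 2 ^ K \<le> card E"
    by (rule horseshoe_separated[OF _ shadowing loops])
  have "0 < La * Lb" using loops(1,2) unfolding delta_loop_def by simp
  then show ?thesis
    using top_entropy_pos_of_separated_growth[OF \<open>e / 4 > 0\<close> _ _ growth]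
      separated_card_bounded[OF assms(1) cont fX \<open>e / 4 > 0\<close>] by blast
qed

end
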